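(* There is a subset $A$ of the unit circle $S^1\subseteq\mathbb{R}^2$ such that for every line $l\subseteq\mathbb{R}^2$ and the orthogonal projection $\pi:\mathbb{R}^2\to l$, the set $\pi[A]$ is a Bernstein set in $\pi[S^1]$.
   Context: A subset $S$ of a Polish space $Y$ is a Bernstein set in $Y$ if for every nonempty perfect set $P\subseteq Y$ we have $S\cap P\neq\emptyset$ and $(Y\setminus S)\cap P\neq\emptyset$. *)

theory Defs
  imports "HOL-Analysis.Analysis"
begin

definition perfect_in :: "'a::metric_space set \<Rightarrow> 'a set \<Rightarrow> bool" where
  "perfect_in Y P \<longleftrightarrow> closedin (top_of_set Y) P \<and> (\<forall>x\<in>P. x islimpt P)"

definition bernstein_in :: "'a::metric_space set \<Rightarrow> 'a set \<Rightarrow> bool" where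
  "bernstein_in S Y \<longleftrightarrow> S \<subseteq> Y \<and>
     (\<forall>P. perfect_in Y P \<and> P \<noteq> {} \<longrightarrow> S \<inter> P \<noteq> {} \<and> (Y - S) \<inter> P \<noteq> {})"

definition line_through :: "real^2 \<Rightarrow> real^2 \<Rightarrow> (real^2) set" where
  "line_through a d = {a + t *\<^sub>R d | t. True}"

definition orth_proj_line :: "real^2 \<Rightarrow> real^2 \<Rightarrow> real^2 \<Rightarrow> real^2" where
  "orth_proj_line a d x = a + (((x - a) \<bullet> d) / (d \<bullet> d)) *\<^sub>R d"

end

theory Submission
  imports Defs
begin

(* There are only continuum many pairs (projection, nonempty perfect subset P of the projected
   circle), because a closed set is determined by the basic open sets it misses. Every such P has
   the cardinality of the continuum, whereas a projection is at most two-to-one on the circle.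
   Hence a transfinite recursion along a well-order of the pairs whose initial segments are all
   smaller than the continuum picks, for each pair, a circle point projecting into P and a
   witness in P that is the projection of no chosen point: at each stage fewer than continuum
   many finite sets have to be avoided. *)

unbundle cardinal_syntax

lemma lepoll_iff_card_of_ordLeq: "A \<lesssim> B \<longleftrightarrow> |A| \<le>o |B|"
  by (simp add: lepoll_def card_of_ordLeq[symmetric])

lemma ex_not_in_finite_Un_UN_finite:
  assumes "|K| <o |Y|" "infinite Y" "finite E" "\<And>k. k \<in> K \<Longrightarrow> finite (F k)"
  shows "\<exists>y \<in> Y. y \<notin> E \<and> (\<forall>k \<in> K. y \<notin> F k)"
proof -
  have "\<not> Y \<subseteq> E \<union> (\<Union>k\<in>K. F k)"
  proof
    assume cover: "Y \<subseteq> E \<union> (\<Union>k\<in>K. F k)"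
    show False
    proof (cases "finite K")
      case True
      then show False
        using cover assms(2-4) finite_subset by blast
    next
      case False
      then have "E \<union> (\<Union>k\<in>K. F k) = (\<Union>k\<in>K. F k \<union> E)"
        by auto
      moreover have "|\<Union>k\<in>K. F k \<union> E| \<le>o |K|"
      proof (rule card_of_UNION_ordLeq_infinite[OF False card_of_mono1[OF subset_refl]])
        show "\<forall>k\<in>K. |F k \<union> E| \<le>o |K|"
          using False assms(3,4) finite_lepoll_infinite lepoll_iff_card_of_ordLeq by blast
      qed
      ultimately have "|Y| \<le>o |K|"
        using cover card_of_mono1 ordLeq_transitive by metis
      then show False
        using assms(1) not_ordLess_ordLeq by blast
    qed
  qed
  then show ?thesis
    by blast
qed

lemma ex_point_and_witness_avoiding:
  assumes "|K| <o |P|" "infinite P" "P \<subseteq> f ` X" "\<And>k. k \<in> K \<Longrightarrow> finite (F k)"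
  shows "\<exists>x \<in> X. f x \<in> P \<and> (\<forall>k \<in> K. x \<notin> F k) \<and>
    (\<exists>t \<in> P. t \<noteq> f x \<and> (\<forall>k \<in> K. t \<noteq> f (u k)))"
proof -
  let ?Y = "{x \<in> X. f x \<in> P}"
  have "|P| \<le>o |?Y|"
    using assms(3) by (intro surj_imp_ordLeq) auto
  then have "|K| <o |?Y|" "infinite ?Y"
    using assms(1,2) ordLess_ordLeq_trans card_of_ordLeq_infinite by blast+
  then obtain x where x: "x \<in> ?Y" "\<forall>k \<in> K. x \<notin> F k"
    using ex_not_in_finite_Un_UN_finite[of K ?Y "{}" F] assms(4) by auto
  moreover have "\<exists>t \<in> P. t \<notin> {f x} \<and> (\<forall>k \<in> K. t \<notin> {f (u k)})"
    by (rule ex_not_in_finite_Un_UN_finite[OF assms(1,2)]) simp_all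
  ultimately show ?thesis
    by auto
qed

lemma wo_rel_card_of: "wo_rel |A|"
  unfolding wo_rel_def by (rule card_of_Well_order)

lemma card_of_underS_ordLess:
  assumes "i \<in> I" "I \<lesssim> B"
  shows "|underS |I| i| <o |B|"
  using card_of_underS[OF card_of_Card_order, of i I] assms
  by (simp add: Field_card_of lepoll_iff_card_of_ordLeq ordLess_ordLeq_trans)

lemma ex_points_and_witnesses_along_card_order:
  fixes f :: "'i \<Rightarrow> 'a \<Rightarrow> 'b" and P :: "'i \<Rightarrow> 'b set"
  assumes "I \<lesssim> C" "infinite C"
    and P_image: "\<And>i. i \<in> I \<Longrightarrow> P i \<subseteq> f i ` X"
    and P_large: "\<And>i. i \<in> I \<Longrightarrow> C \<lesssim> P i"
    and fibres: "\<And>i y. i \<in> I \<Longrightarrow> finite {x \<in> X. f i x = y}"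
  shows "\<exists>x t. \<forall>i \<in> I. x i \<in> X \<and> f i (x i) \<in> P i \<and> t i \<in> P i \<and> t i \<noteq> f i (x i) \<and>
    (\<forall>j \<in> underS |I| i. f j (x i) \<noteq> t j \<and> t i \<noteq> f i (x j))"
proof -
  let ?r = "|I|"
  have initial_segment: "underS ?r i \<subseteq> I" for i
    by (metis Field_card_of subsetI underS_Field)
  define good where "good g i xt \<longleftrightarrow> i \<in> I \<longrightarrow>
      fst xt \<in> X \<and> f i (fst xt) \<in> P i \<and> snd xt \<in> P i \<and> snd xt \<noteq> f i (fst xt) \<and>
      (\<forall>j \<in> underS ?r i. f j (fst xt) \<noteq> snd (g j) \<and> snd xt \<noteq> f i (fst (g j)))"
    for g :: "'i \<Rightarrow> 'a \<times> 'b" and i xt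
  have "\<exists>g. \<forall>i. good g i (g i)"
  proof (rule dependent_wf_choice[OF wo_rel.WF[OF wo_rel_card_of]])
    show "good g i xt = good g' i xt" if "\<And>j. (j, i) \<in> ?r - Id \<Longrightarrow> g j = g' j" for g g' i xt
      using that by (simp add: good_def underS_def)
  next
    fix i and g :: "'i \<Rightarrow> 'a \<times> 'b"
    show "\<exists>xt. good g i xt"
    proof (cases "i \<in> I")
      case True
      have small: "|underS ?r i| <o |P i|"
        using card_of_underS_ordLess[OF True lepoll_trans[OF assms(1) P_large[OF True]]] .
      have infinite: "infinite (P i)"
        using assms(2) P_large[OF True] infinite_le_lepoll lepoll_trans by metis
      have finite: "finite {x \<in> X. f j x = snd (g j)}" if "j \<in> underS ?r i" for j
        using that initial_segment by (intro fibres) blast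
      obtain x t where "x \<in> X" "f i x \<in> P i" "t \<in> P i" "t \<noteq> f i x"
        "\<forall>j \<in> underS ?r i. x \<notin> {x \<in> X. f j x = snd (g j)}"
        "\<forall>j \<in> underS ?r i. t \<noteq> f i (fst (g j))"
        using ex_point_and_witness_avoiding[OF small infinite P_image[OF True],
            where F = "\<lambda>j. {x \<in> X. f j x = snd (g j)}" and u = "\<lambda>j. fst (g j)"] finite
        by blast
      then have "good g i (x, t)"
        by (simp add: good_def)
      then show ?thesis ..
    qed (simp add: good_def)
  qed
  then obtain g where "\<forall>i. good g i (g i)"
    by blast
  then show ?thesis
    unfolding good_def by (intro exI[of _ "\<lambda>i. fst (g i)"] exI[of _ "\<lambda>i. snd (g i)"]) blast
qed

lemma ex_subset_splitting_images:
  fixes f :: "'i \<Rightarrow> 'a \<Rightarrow> 'b" and P :: "'i \<Rightarrow> 'b set"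
  assumes "I \<lesssim> C" "infinite C"
    and "\<And>i. i \<in> I \<Longrightarrow> P i \<subseteq> f i ` X"
    and "\<And>i. i \<in> I \<Longrightarrow> C \<lesssim> P i"
    and "\<And>i y. i \<in> I \<Longrightarrow> finite {x \<in> X. f i x = y}"
  shows "\<exists>A \<subseteq> X. \<forall>i \<in> I. f i ` A \<inter> P i \<noteq> {} \<and> \<not> P i \<subseteq> f i ` A"
proof -
  obtain x t where xt: "\<forall>i \<in> I. x i \<in> X \<and> f i (x i) \<in> P i \<and> t i \<in> P i \<and> t i \<noteq> f i (x i) \<and>
      (\<forall>j \<in> underS |I| i. f j (x i) \<noteq> t j \<and> t i \<noteq> f i (x j))"
    using ex_points_and_witnesses_along_card_order[where f = f and P = P and X = X, OF assms]
    by blast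
  have "t i \<noteq> f i (x j)" if i: "i \<in> I" and j: "j \<in> I" for i j
  proof -
    have "j = i \<or> j \<in> underS |I| i \<or> i \<in> underS |I| j"
      using wo_rel.TOTALS[OF wo_rel_card_of[of I]] i j
      by (auto simp: Field_card_of underS_def)
    moreover have "t i \<noteq> f i (x i)" "j \<in> underS |I| i \<Longrightarrow> t i \<noteq> f i (x j)"
      using i xt by auto
    moreover have "i \<in> underS |I| j \<Longrightarrow> f i (x j) \<noteq> t i"
      using j xt by auto
    ultimately show ?thesis
      by auto
  qed
  then show ?thesis
    using xt by (intro exI[of _ "x ` I"]) blast
qed

lemma times_lepoll_reals:
  assumes "A \<lesssim> (UNIV::real set)" and "B \<lesssim> (UNIV::real set)"
  shows "A \<times> B \<lesssim> (UNIV::real set)"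
proof -
  have "A \<times> B \<lesssim> (UNIV::real set) \<times> (UNIV::real set)"
    using assms by (rule times_lepoll_mono)
  also have "\<dots> \<approx> (UNIV::real set)"
    using card_of_Times_same_infinite[OF infinite_UNIV_char_0] eqpoll_iff_card_of_ordIso by blast
  finally show ?thesis .
qed

lemma closed_sets_lepoll_reals:
  "{S :: 'a::second_countable_topology set. closed S} \<lesssim> (UNIV::real set)"
proof -
  obtain \<B> :: "'a set set" where "countable \<B>"
    and basis: "\<And>S. open S \<Longrightarrow> \<exists>U. U \<subseteq> \<B> \<and> S = \<Union>U"
    by (metis univ_second_countable)
  define code where "code S = to_nat_on \<B> ` {C \<in> \<B>. C \<inter> S = {}}" for S
  have "- S = \<Union>{C \<in> \<B>. C \<inter> S = {}}" if closed: "closed S" for S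
  proof -
    obtain U where "U \<subseteq> \<B>" "- S = \<Union>U"
      using basis[of "- S"] closed by (auto simp: closed_def)
    then show ?thesis by blast
  qed
  then have "inj_on code {S. closed S}"
    unfolding code_def
    by (intro inj_onI) (metis (no_types, lifting) \<open>countable \<B>\<close> compl_eq_compl_iff
        inj_on_image_eq_iff inj_on_to_nat_on mem_Collect_eq subsetI)
  then have "{S :: 'a set. closed S} \<lesssim> (UNIV::nat set set)"
    by (auto simp: lepoll_def)
  also have "\<dots> \<approx> (UNIV::real set)"
    by (rule nat_sets_eqpoll_reals)
  finally show ?thesis .
qed

lemma UNIV_lepoll_reals:
  "(UNIV :: 'a::{second_countable_topology, t1_space} set) \<lesssim> (UNIV::real set)"
proof -
  have "(UNIV :: 'a set) \<lesssim> {S :: 'a set. closed S}"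
    unfolding lepoll_def by (intro exI[of _ "\<lambda>x. {x}"]) auto
  also have "\<dots> \<lesssim> (UNIV::real set)"
    by (rule closed_sets_lepoll_reals)
  finally show ?thesis .
qed

lemma euclidean_derived_set_of: "euclidean derived_set_of S = {x. x islimpt S}"
  by (auto simp: derived_set_of_def islimpt_def)

lemma perfect_in_imp_subset: "perfect_in Y P \<Longrightarrow> P \<subseteq> Y"
  unfolding perfect_in_def using closedin_imp_subset by blast

lemma perfect_in_imp_closed: "perfect_in Y P \<Longrightarrow> closed Y \<Longrightarrow> closed P"
  unfolding perfect_in_def using closedin_closed_trans by blast

lemma reals_lepoll_perfect_in:
  fixes P :: "'a::complete_space set"
  assumes "perfect_in Y P" "closed Y" "P \<noteq> {}"
  shows "(UNIV::real set) \<lesssim> P"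
proof (rule lepoll_perfect_set)
  show "completely_metrizable_space (euclidean :: 'a topology) \<or>
        locally_compact_space (euclidean :: 'a topology) \<and> Hausdorff_space (euclidean :: 'a topology)"
    using completely_metrizable_space_euclidean by blast
  have "closed P"
    using assms perfect_in_imp_closed by blast
  then show "euclidean derived_set_of P = P"
    using assms(1) by (auto simp: euclidean_derived_set_of perfect_in_def closed_limpt)
qed fact

lemma bernstein_inI:
  assumes "S \<subseteq> Y" "\<And>P. perfect_in Y P \<Longrightarrow> P \<noteq> {} \<Longrightarrow> S \<inter> P \<noteq> {} \<and> \<not> P \<subseteq> S"
  shows "bernstein_in S Y"
  using assms perfect_in_imp_subset unfolding bernstein_in_def by blast

lemma inner_orth_proj_line: "d \<noteq> 0 \<Longrightarrow> orth_proj_line a d x \<bullet> d = x \<bullet> d"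
  by (simp add: orth_proj_line_def inner_add_left inner_diff_left)

lemma closed_orth_proj_line_image: "compact S \<Longrightarrow> closed (orth_proj_line a d ` S)"
  unfolding orth_proj_line_def divide_inverse
  by (intro compact_imp_closed compact_continuous_image continuous_intros)

lemma finite_sphere_Int_hyperplane:
  fixes d :: "real^2"
  assumes "d \<noteq> 0"
  shows "finite {x \<in> sphere 0 r. x \<bullet> d = c}"
proof -
  define v :: "real^2" where "v = vector [- d$2, d$1]"
  have decompose: "(d \<bullet> d) *\<^sub>R x = (x \<bullet> d) *\<^sub>R d + (x \<bullet> v) *\<^sub>R v" for x
    by (simp add: v_def vec_eq_iff forall_2 inner_vec_def sum_2 algebra_simps)
  have Lagrange: "(x \<bullet> d)\<^sup>2 + (x \<bullet> v)\<^sup>2 = (x \<bullet> x) * (d \<bullet> d)" for x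
    by (simp add: v_def inner_vec_def sum_2 power2_eq_square algebra_simps)
  define F where "F = {x \<in> sphere 0 r. x \<bullet> d = c}"
  have "inj_on (\<lambda>x. x \<bullet> v) F"
  proof (rule inj_onI)
    fix x y assume "x \<in> F" "y \<in> F" "x \<bullet> v = y \<bullet> v"
    then have "(d \<bullet> d) *\<^sub>R x = (d \<bullet> d) *\<^sub>R y"
      by (simp add: F_def decompose)
    then show "x = y"
      using assms by simp
  qed
  define w where "w = sqrt (r\<^sup>2 * (d \<bullet> d) - c\<^sup>2)"
  have "(\<lambda>x. x \<bullet> v) ` F \<subseteq> {w, - w}"
  proof
    fix s assume "s \<in> (\<lambda>x. x \<bullet> v) ` F"
    then obtain x where "x \<in> F" "s = x \<bullet> v"
      by blast
    then have "s\<^sup>2 = r\<^sup>2 * (d \<bullet> d) - c\<^sup>2"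
      using Lagrange[of x] by (simp add: F_def dot_square_norm)
    then show "s \<in> {w, - w}"
      using real_sqrt_abs[of s] by (auto simp: w_def)
  qed
  with \<open>inj_on (\<lambda>x. x \<bullet> v) F\<close> show ?thesis
    unfolding F_def[symmetric] by (meson finite.emptyI finite.insertI finite_imageD finite_subset)
qed

lemma finite_orth_proj_line_fibre:
  "d \<noteq> 0 \<Longrightarrow> finite {x \<in> sphere 0 r. orth_proj_line a d x = y}"
  by (rule finite_subset[OF _ finite_sphere_Int_hyperplane[of d r "y \<bullet> d"]])
    (auto simp: inner_orth_proj_line)

definition projected_perfect_sets :: "((real^2 \<Rightarrow> real^2) \<times> (real^2) set) set" where
  "projected_perfect_sets = {(orth_proj_line a d, P) | a d P.
     d \<noteq> 0 \<and> P \<noteq> {} \<and> perfect_in (orth_proj_line a d ` sphere 0 1) P}"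

lemma projected_perfect_sets_lepoll_reals: "projected_perfect_sets \<lesssim> (UNIV::real set)"
proof -
  have "projected_perfect_sets \<subseteq>
      (\<lambda>(a, d, P). (orth_proj_line a d, P)) ` (UNIV \<times> UNIV \<times> {P. closed P})"
  proof
    fix i assume "i \<in> projected_perfect_sets"
    then obtain a d P where i: "i = (orth_proj_line a d, P)"
      and perfect: "perfect_in (orth_proj_line a d ` sphere 0 1) P"
      unfolding projected_perfect_sets_def by blast
    have "closed P"
      using perfect_in_imp_closed[OF perfect closed_orth_proj_line_image] by simp
    then show "i \<in> (\<lambda>(a, d, P). (orth_proj_line a d, P)) ` (UNIV \<times> UNIV \<times> {P. closed P})"
      unfolding i by (intro image_eqI[where x = "(a, d, P)"]) simp_all
  qed
  then have "projected_perfect_sets \<lesssim>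
      (UNIV::(real^2) set) \<times> (UNIV::(real^2) set) \<times> {P :: (real^2) set. closed P}"
    by (rule subset_image_lepoll)
  also have "\<dots> \<lesssim> (UNIV::real set)"
    by (intro times_lepoll_reals UNIV_lepoll_reals closed_sets_lepoll_reals)
  finally show ?thesis .
qed

lemma projected_perfect_setsD:
  assumes "i \<in> projected_perfect_sets"
  shows "snd i \<subseteq> fst i ` sphere 0 1" "(UNIV::real set) \<lesssim> snd i"
    "finite {x \<in> sphere 0 1. fst i x = y}"
proof -
  obtain a d P where i: "i = (orth_proj_line a d, P)" and "d \<noteq> 0" "P \<noteq> {}"
    and perfect: "perfect_in (orth_proj_line a d ` sphere 0 1) P"
    using assms unfolding projected_perfect_sets_def by blast
  then show "snd i \<subseteq> fst i ` sphere 0 1"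
    by (simp add: perfect_in_imp_subset)
  show "(UNIV::real set) \<lesssim> snd i"
    using reals_lepoll_perfect_in[OF perfect closed_orth_proj_line_image] \<open>P \<noteq> {}\<close> i by simp
  show "finite {x \<in> sphere 0 1. fst i x = y}"
    unfolding i fst_conv by (rule finite_orth_proj_line_fibre[OF \<open>d \<noteq> 0\<close>])
qed

theorem mainTheorem5:
  shows "\<exists>A :: (real^2) set. A \<subseteq> sphere 0 1 \<and>
    (\<forall>a d. d \<noteq> 0 \<longrightarrow>
       bernstein_in (orth_proj_line a d ` A) (orth_proj_line a d ` sphere 0 1))"
proof -
  have "\<exists>A \<subseteq> sphere 0 1. \<forall>i \<in> projected_perfect_sets.
      fst i ` A \<inter> snd i \<noteq> {} \<and> \<not> snd i \<subseteq> fst i ` A"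
    by (rule ex_subset_splitting_images[OF projected_perfect_sets_lepoll_reals infinite_UNIV_char_0
          projected_perfect_setsD])
  then obtain A where "A \<subseteq> sphere 0 1" and split: "\<forall>i \<in> projected_perfect_sets.
      fst i ` A \<inter> snd i \<noteq> {} \<and> \<not> snd i \<subseteq> fst i ` A"
    by blast
  have "bernstein_in (orth_proj_line a d ` A) (orth_proj_line a d ` sphere 0 1)" if "d \<noteq> 0" for a d
  proof (rule bernstein_inI)
    show "orth_proj_line a d ` A \<subseteq> orth_proj_line a d ` sphere 0 1"
      using \<open>A \<subseteq> sphere 0 1\<close> by blast
    fix P assume perfect: "perfect_in (orth_proj_line a d ` sphere 0 1) P" and "P \<noteq> {}"
    have member: "(orth_proj_line a d, P) \<in> projected_perfect_sets"
      unfolding projected_perfect_sets_def mem_Collect_eq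
      using that perfect \<open>P \<noteq> {}\<close> by (intro exI[of _ a] exI[of _ d] exI[of _ P]) simp
    show "orth_proj_line a d ` A \<inter> P \<noteq> {} \<and> \<not> P \<subseteq> orth_proj_line a d ` A"
      using split[rule_format, OF member] by simp
  qed
  with \<open>A \<subseteq> sphere 0 1\<close> show ?thesis
    by blast
qed

end
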